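(* Let $d\ge2$ and let $\ell=\overline{xy}$ be a critical leaf of a sibling $\sigma_d$-invariant lamination $\mathcal L$ such that $x$ is periodic under $\sigma_d$. Then $\ell$ is isolated in $\mathcal L$ (it is not a Hausdorff limit of other leaves of $\mathcal L$).
   Context: $\mathbb S$ is the unit circle, $\sigma_d(z)=z^d$. A chord $\overline{ab}$ joins $a,b\in\mathbb S$; distinct chords cross if they meet in the open unit disk; a chord is critical if $a\ne b$ and $\sigma_d(a)=\sigma_d(b)$. A lamination is a family of pairwise non-crossing chords (leaves) containing all points of $\mathbb S$, whose union is closed. It is sibling $\sigma_d$-invariant if (1) images of leaves are leaves; (2) every leaf is the image of some leaf; (3) for every non-critical leaf $\ell$ there exist $d$ pairwise disjoint leaves $\ell_1=\ell,\dots,\ell_d$ with equal $\sigma_d$-images. *)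

theory Defs
  imports "HOL-Analysis.Analysis"
begin

abbreviation circle :: "complex set" where "circle \<equiv> sphere 0 1"

definition sigma :: "nat \<Rightarrow> complex \<Rightarrow> complex" where
  "sigma d z = z ^ d"

text \<open>A chord is represented by its set of endpoints {a,b} (a = b allowed:
  degenerate chord = point of the circle). Geometrically it is the convex hull
  of its endpoints, i.e. the closed segment.\<close>
definition is_chord :: "complex set \<Rightarrow> bool" where
  "is_chord l \<longleftrightarrow> (\<exists>a b. a \<in> circle \<and> b \<in> circle \<and> l = {a, b})"

definition chord_seg :: "complex set \<Rightarrow> complex set" where
  "chord_seg l = convex hull l"

definition crossing :: "complex set \<Rightarrow> complex set \<Rightarrow> bool" where
  "crossing l m \<longleftrightarrow> l \<noteq> m \<and> chord_seg l \<inter> chord_seg m \<inter> ball 0 1 \<noteq> {}"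

definition critical :: "nat \<Rightarrow> complex set \<Rightarrow> bool" where
  "critical d l \<longleftrightarrow> (\<exists>a b. l = {a, b} \<and> a \<noteq> b \<and> sigma d a = sigma d b)"

definition lamination :: "complex set set \<Rightarrow> bool" where
  "lamination L \<longleftrightarrow>
     (\<forall>l\<in>L. is_chord l) \<and>
     (\<forall>l\<in>L. \<forall>m\<in>L. \<not> crossing l m) \<and>
     (\<forall>a\<in>circle. {a} \<in> L) \<and>
     closed (\<Union>l\<in>L. chord_seg l)"

definition sibling_invariant :: "nat \<Rightarrow> complex set set \<Rightarrow> bool" where
  "sibling_invariant d L \<longleftrightarrow>
     lamination L \<and>
     (\<forall>l\<in>L. sigma d ` l \<in> L) \<and>
     (\<forall>l\<in>L. \<exists>m\<in>L. sigma d ` m = l) \<and>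
     (\<forall>l\<in>L. \<not> critical d l \<longrightarrow>
        (\<exists>s :: nat \<Rightarrow> complex set. s 0 = l \<and>
            (\<forall>i<d. s i \<in> L \<and> sigma d ` (s i) = sigma d ` l) \<and>
            (\<forall>i<d. \<forall>j<d. i \<noteq> j \<longrightarrow> chord_seg (s i) \<inter> chord_seg (s j) = {})))"

definition hausdorff_dist :: "complex set \<Rightarrow> complex set \<Rightarrow> real" where
  "hausdorff_dist A B = max (SUP a\<in>A. infdist a B) (SUP b\<in>B. infdist b A)"

definition periodic_pt :: "nat \<Rightarrow> complex \<Rightarrow> bool" where
  "periodic_pt d x \<longleftrightarrow> (\<exists>n>0. (sigma d ^^ n) x = x)"

definition isolated_leaf :: "complex set set \<Rightarrow> complex set \<Rightarrow> bool" where
  "isolated_leaf L l \<longleftrightarrow>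
     \<not> (\<exists>s :: nat \<Rightarrow> complex set. (\<forall>n. s n \<in> L - {l}) \<and>
            (\<lambda>n. hausdorff_dist (chord_seg (s n)) (chord_seg l)) \<longlonglongrightarrow> 0)"

end

theory Submission
  imports Defs "HOL-Library.Real_Mod"
begin

text \<open>Work in angular coordinates around x. If x has period n, then z \<mapsto> z^N with N = d^n
  fixes x and, as y^d = x^d, also sends y to x; write y = x cis \<psi> with 2\<pi>/d \<le> \<psi> \<le> 2\<pi> - 2\<pi>/d.
  A leaf Hausdorff-close to xy has endpoints x cis \<alpha> and y cis \<beta> with N|\<alpha>|, N|\<beta>| < 2\<pi>/d.
  If \<alpha> and \<beta> are both nonzero, either this leaf already crosses xy or its image under z^N,
  with endpoints x cis (N\<alpha>) and x cis (N\<beta>), does. If only \<alpha> \<noteq> 0, the image leaf from x cis (N\<alpha>)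
  to x crosses the leaf itself, because multiplying a small angle by N pushes the endpoint across.
  If only \<beta> \<noteq> 0, the leaf is not critical; among its d pairwise disjoint siblings, the one through
  x cis \<beta> ends at a preimage of \<sigma>(x) other than x, and that sibling is excluded by the previous case.
  Hence \<alpha> = \<beta> = 0.\<close>

lemma Im_cis_triple:
  "Im ((cis r - cis p) * cnj (cis q - cis p)) = 4 * sin ((r-q)/2) * sin ((q-p)/2) * sin ((r-p)/2)"
proof -
  define u where "u = (r-q)/2"
  define v where "v = (q-p)/2"
  have hr: "r = p + 2*u + 2 * v" and hq: "q = p + 2 * v" and hrp: "(r-p)/2 = u + v"
    by (auto simp: u_def v_def field_simps)
  have "Im ((cis r - cis p) * cnj (cis q - cis p)) = sin (r - q) - sin (r - p) + sin (q - p)"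
    by (simp add: sin_diff algebra_simps)
  also have "\<dots> = sin (2*u) - sin (2*(u+v)) + sin (2 * v)" by (simp add: hr hq algebra_simps)
  also have "\<dots> = 4 * sin u * sin v * sin (u+v)"
  proof -
    have e1: "sin (2*(u+v)) = sin (2*u) * cos (2 * v) + cos (2*u) * sin (2 * v)"
      by (simp add: distrib_left sin_add)
    have "sin u ^2 + cos u ^2 = 1" and "sin v ^2 + cos v ^2 = 1" by simp_all
    then show ?thesis unfolding e1 unfolding sin_double cos_double sin_add by algebra
  qed
  finally show ?thesis by (simp add: u_def v_def hrp)
qed

lemma Im_rotated_cis_triple:
  assumes "norm x = 1"
  shows "Im ((x * cis r - x * cis p) * cnj (x * cis q - x * cis p))
       = 4 * sin ((r-q)/2) * sin ((q-p)/2) * sin ((r-p)/2)"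
proof -
  have "x * cnj x = 1" using assms by (metis complex_norm_square of_real_1 power_one)
  moreover have "(x * cis r - x * cis p) * cnj (x * cis q - x * cis p)
      = (x * cnj x) * ((cis r - cis p) * cnj (cis q - cis p))"
    by (simp add: algebra_simps)
  ultimately show ?thesis using Im_cis_triple by simp
qed

lemma norm_segment_point_sq:
  fixes a b :: complex
  assumes "norm a = 1" "norm b = 1"
  shows "(norm (a + of_real t * (b - a)))^2 = 1 - t*(1-t) * (norm (b-a))^2"
proof -
  have "Re a ^2 + Im a ^2 = 1" "Re b ^2 + Im b ^2 = 1"
    using assms by (metis cmod_power2 power_one)+
  then show ?thesis unfolding cmod_power2
    by (simp add: power2_eq_square algebra_simps) algebra
qed

lemma segment_point_in_chord_seg:
  fixes a b :: complex
  assumes "0 \<le> t" "t \<le> 1"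
  shows "a + of_real t * (b - a) \<in> chord_seg {a, b}"
proof -
  have "a + of_real t * (b - a) = (1 - t) *\<^sub>R a + t *\<^sub>R b"
    by (simp add: scaleR_conv_of_real algebra_simps)
  then show ?thesis
    unfolding chord_seg_def segment_convex_hull[symmetric] closed_segment_def
    using assms by blast
qed

lemma unit_line_point_in_chord_seg:
  fixes a b z :: complex
  assumes na: "norm a = 1" and nb: "norm b = 1" and ab: "a \<noteq> b"
    and line: "Im ((z - a) * cnj (b - a)) = 0" and z: "norm z < 1"
  shows "z \<in> chord_seg {a, b}"
proof -
  define k where "k = (z - a) * cnj (b - a)"
  have kk: "k = of_real (Re k)" using line by (simp add: k_def complex_eq_iff)
  have bane: "b - a \<noteq> 0" using ab by simp
  define lam where "lam = Re k / (norm (b - a))^2"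
  have zl: "z = a + of_real lam * (b - a)"
  proof -
    have nn: "(b - a) * cnj (b - a) = of_real ((norm (b - a))^2)" by (metis complex_norm_square)
    have nz: "(b - a) * cnj (b - a) \<noteq> 0" using bane by simp
    have "z - a = ((z - a) * ((b - a) * cnj (b - a))) / ((b - a) * cnj (b - a))" using nz by simp
    also have "\<dots> = k * (b - a) / ((b - a) * cnj (b - a))" by (simp add: k_def mult_ac)
    also have "\<dots> = of_real lam * (b - a)" unfolding nn by (subst kk) (simp add: lam_def)
    finally show ?thesis by (simp add: algebra_simps)
  qed
  have "(norm z)^2 < 1" using z norm_ge_zero by (simp add: power_less_one_iff)
  then have "lam*(1-lam)*(norm (b-a))^2 > 0"
    unfolding zl norm_segment_point_sq[OF na nb] by linarith
  then have "lam*(1-lam) > 0" using bane by (simp add: zero_less_mult_iff)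
  then have "0 < lam" "lam < 1" by (auto simp: zero_less_mult_iff)
  then show ?thesis unfolding zl using segment_point_in_chord_seg by auto
qed

text \<open>f measures on which side of the line through a and b a point lies; the point of the
  segment from c to e where f vanishes lies on both chords and strictly inside the disk.\<close>
lemma crossing_if_opposite_sides:
  fixes a b c e :: complex
  defines "f \<equiv> \<lambda>w. Im ((w - a) * cnj (b - a))"
  assumes na: "norm a = 1" and nb: "norm b = 1" and nc: "norm c = 1" and ne: "norm e = 1"
    and ab: "a \<noteq> b" and fc: "f c < 0" and fe: "f e > 0"
  shows "crossing {a, b} {c, e}"
proof -
  have "f a = 0" "f b = 0" by (simp_all add: f_def algebra_simps)
  then have neq: "{a, b} \<noteq> {c, e}" using fc by (metis insertCI less_irrefl insertE singletonD)
  define t where "t = f c / (f c - f e)"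
  have t0: "0 < t" and t1: "t < 1" using fc fe by (auto simp: t_def field_simps)
  define z where "z = c + of_real t * (e - c)"
  have "f z = f c + t * (f e - f c)" by (simp add: f_def z_def algebra_simps)
  then have fz: "f z = 0" using fc fe by (simp add: t_def field_simps)
  have zseg: "z \<in> chord_seg {c, e}" unfolding z_def using segment_point_in_chord_seg t0 t1 by auto
  have "c \<noteq> e" using fc fe by auto
  then have "t*(1-t)*(norm (e-c))^2 > 0" using t0 t1 by simp
  then have "(norm z)^2 < 1" unfolding z_def norm_segment_point_sq[OF nc ne] by linarith
  then have "norm z < 1" by (simp add: power_less_one_iff)
  moreover have "z \<in> chord_seg {a, b}"
    using unit_line_point_in_chord_seg[OF na nb ab] fz \<open>norm z < 1\<close> by (simp add: f_def)
  ultimately show ?thesis unfolding crossing_def using neq zseg by auto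
qed

lemma crossing_cis_interleaved:
  fixes x :: complex
  assumes nx: "norm x = 1" and "p < r" "r < q" "q < s" "s < p + 2*pi"
  shows "crossing {x * cis p, x * cis q} {x * cis r, x * cis s}"
proof -
  define f where "f \<equiv> \<lambda>w. Im ((w - x * cis p) * cnj (x * cis q - x * cis p))"
  have "sin ((q-r)/2) > 0" "sin ((q-p)/2) > 0" "sin ((r-p)/2) > 0"
    "sin ((s-q)/2) > 0" "sin ((s-p)/2) > 0"
    using sin_gt_zero assms by simp_all
  moreover have "sin ((r-q)/2) = - sin ((q-r)/2)" by (metis minus_diff_eq minus_divide_left sin_minus)
  ultimately have fc: "f (x * cis r) < 0" and fe: "f (x * cis s) > 0"
    unfolding f_def Im_rotated_cis_triple[OF nx] by (simp_all add: mult_neg_pos)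
  have ab: "x * cis p \<noteq> x * cis q"
  proof
    assume "x * cis p = x * cis q"
    then have "x * cis q - x * cis p = 0" by (metis diff_self)
    then have "f (x * cis r) = 0" unfolding f_def by (simp only: complex_cnj_zero mult_zero_right zero_complex.sel)
    with fc show False by simp
  qed
  show ?thesis
    by (rule crossing_if_opposite_sides) (use nx ab fc fe in \<open>auto simp: f_def norm_mult\<close>)
qed

lemma cis_neq_1:
  assumes "t \<noteq> 0" "\<bar>t\<bar> < 2*pi"
  shows "cis t \<noteq> 1"
proof
  assume "cis t = 1"
  then obtain m :: int where m: "t = of_int m * (2 * pi)" by (auto simp: cis_eq_1_iff)
  then have "\<bar>of_int m\<bar> * (2*pi) < 1 * (2*pi)" using assms by (simp add: abs_mult)
  then have "of_int \<bar>m\<bar> < (1::real)" by (simp only: mult_less_cancel_right of_int_abs) simp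
  then show False using m assms by simp
qed

lemma nontrivial_root_of_unity_angle:
  fixes w :: complex
  assumes d: "d > 0" and w: "w ^ d = 1" and w1: "w \<noteq> 1"
  obtains phi where "w = cis phi" "2*pi/d \<le> phi" "phi \<le> 2*pi - 2*pi/d"
proof -
  obtain k where k: "k < d" and wk: "w = cis (2 * pi * real k / real d)"
    using Complex.bij_betw_roots_unity[OF d] w unfolding bij_betw_def by auto
  have "k \<noteq> 0"
  proof
    assume "k = 0"
    with wk w1 show False by simp
  qed
  then have k1: "1 \<le> real k" and k2: "real k \<le> real d - 1" using k by auto
  have "2*pi/d \<le> 2 * pi * real k / real d" using k1 d by (simp add: divide_right_mono)
  moreover have "2 * pi * real k / real d \<le> 2 * pi * (real d - 1) / real d"
    using k2 d by (intro divide_right_mono mult_left_mono) auto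
  moreover have "2 * pi * (real d - 1) / real d = 2*pi - 2*pi/d" using d by (simp add: field_simps)
  ultimately show ?thesis using that wk by fastforce
qed

lemma funpow_sigma: "(sigma d ^^ n) z = z ^ (d ^ n)"
  by (induction n) (simp_all add: sigma_def power_mult[symmetric] mult_ac)

lemma sibling_invariant_no_crossing:
  "sibling_invariant d L \<Longrightarrow> \<forall>l\<in>L. \<forall>m\<in>L. \<not> crossing l m"
  by (simp add: sibling_invariant_def lamination_def)

lemma sibling_invariant_is_chord:
  "sibling_invariant d L \<Longrightarrow> l \<in> L \<Longrightarrow> is_chord l"
  by (simp add: sibling_invariant_def lamination_def)

lemma sibling_invariant_image_power:
  assumes "sibling_invariant d L"
  shows "\<forall>l\<in>L. (\<lambda>z. z ^ (d ^ n)) ` l \<in> L"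
proof
  fix l assume l: "l \<in> L"
  have step: "\<forall>l\<in>L. sigma d ` l \<in> L" using assms by (simp add: sibling_invariant_def)
  have "(sigma d ^^ n) ` l \<in> L"
  proof (induction n)
    case 0 then show ?case using l by simp
  next
    case (Suc n)
    have "(sigma d ^^ Suc n) ` l = sigma d ` ((sigma d ^^ n) ` l)" by (simp add: image_comp)
    then show ?case using Suc step by simp
  qed
  then show "(\<lambda>z. z ^ (d ^ n)) ` l \<in> L" by (simp add: funpow_sigma)
qed

lemma subset_chord_seg: "l \<subseteq> chord_seg l"
  by (simp add: chord_seg_def hull_subset)

lemma power_pow_eq_periodic:
  fixes e x :: "'a::monoid_mult"
  assumes n: "n > 0" and ed: "e ^ d = x ^ d" and xN: "x ^ (d ^ n) = x"
  shows "e ^ (d ^ n) = x"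
proof -
  have dn: "d ^ n = d * d ^ (n - 1)" using n by (metis power_eq_if neq0_conv)
  show ?thesis using xN ed unfolding dn power_mult by simp
qed

lemma power_mult_cis: "(w * cis a) ^ N = w ^ N * cis (real N * a)"
  by (simp add: power_mult_distrib Complex.DeMoivre)

lemma power_image_rotated_leaf:
  fixes x :: complex
  assumes img: "\<forall>l\<in>L. (\<lambda>z. z ^ N) ` l \<in> L" and xN: "x ^ N = x" and yN: "(x * cis psi) ^ N = x"
    and leaf: "{x * cis a, x * cis (psi + b)} \<in> L"
  shows "{x * cis (real N * a), x * cis (real N * b)} \<in> L"
proof -
  have "x * cis (psi + b) = (x * cis psi) * cis b" by (simp add: cis_mult[symmetric] mult.assoc)
  then have "(\<lambda>z. z ^ N) ` {x * cis a, x * cis (psi + b)}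
      = {x * cis (real N * a), x * cis (real N * b)}"
    using xN yN by (simp only: image_insert image_empty power_mult_cis)
  then show ?thesis using img leaf by metis
qed

lemma leaf_near_fixed_point_angle_eq_0:
  fixes x :: complex and N :: nat
  assumes nc: "\<forall>l\<in>L. \<forall>m\<in>L. \<not> crossing l m"
    and img: "\<forall>l\<in>L. (\<lambda>z. z ^ N) ` l \<in> L"
    and N2: "N \<ge> 2" and nx: "norm x = 1" and xN: "x ^ N = x"
    and leaf: "{x * cis g, x * cis phi} \<in> L" and eN: "(x * cis phi) ^ N = x"
    and small: "real N * \<bar>g\<bar> < B" and B1: "B \<le> phi" and B2: "phi \<le> 2*pi - B"
  shows "g = 0"
proof (rule ccontr)
  assume g0: "g \<noteq> 0"
  have "{x * cis (real N * g), x * cis (real N * 0)} \<in> L"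
    using power_image_rotated_leaf[OF img xN eN, of g 0] leaf by simp
  then have image: "{x * cis (real N * g), x} \<in> L" by simp
  have Bpos: "B > 0" using small g0 by (smt (verit) mult_nonneg_nonneg of_nat_0_le_iff abs_ge_zero)
  consider "g > 0" | "g < 0" using g0 by linarith
  then show False
  proof cases
    case 1
    have "g < real N * g" using 1 N2 by (simp add: mult_less_cancel_right1)
    moreover have "real N * g < phi" using small B1 1 by simp
    ultimately have "crossing {x * cis 0, x * cis (real N * g)} {x * cis g, x * cis phi}"
      using 1 B2 Bpos by (intro crossing_cis_interleaved nx) auto
    then have "crossing {x * cis (real N * g), x} {x * cis g, x * cis phi}"
      by (simp add: insert_commute)
    then show False using nc image leaf by blast
  next
    case 2
    have "real N * g < g" using 2 N2 by (simp add: mult_less_cancel_right1)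
    moreover have "phi - 2*pi < real N * g" using small B2 2 by (simp add: abs_if)
    ultimately have "crossing {x * cis (phi - 2*pi), x * cis g} {x * cis (real N * g), x * cis 0}"
      using 2 B1 Bpos by (intro crossing_cis_interleaved nx) auto
    then have "crossing {x * cis g, x * cis phi} {x * cis (real N * g), x}"
      by (simp add: insert_commute flip: cis_divide)
    then show False using nc image leaf by blast
  qed
qed

lemma leaf_near_preperiodic_leaf_shares_endpoint:
  fixes x :: complex and N :: nat
  assumes nc: "\<forall>l\<in>L. \<forall>m\<in>L. \<not> crossing l m"
    and img: "\<forall>l\<in>L. (\<lambda>z. z ^ N) ` l \<in> L"
    and N2: "N \<ge> 2" and nx: "norm x = 1" and xN: "x ^ N = x"
    and leaf0: "{x, x * cis psi} \<in> L" and yN: "(x * cis psi) ^ N = x"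
    and B1: "B \<le> psi" and B2: "psi \<le> 2*pi - B"
    and leaf: "{x * cis a, x * cis (psi + b)} \<in> L"
    and as: "real N * \<bar>a\<bar> < B" and bs: "real N * \<bar>b\<bar> < B"
  shows "a = 0 \<or> b = 0"
proof (rule ccontr)
  assume "\<not> (a = 0 \<or> b = 0)"
  then have a0: "a \<noteq> 0" and b0: "b \<noteq> 0" by auto
  have Npos: "real N \<ge> 2" using N2 by simp
  have aB: "\<bar>a\<bar> < B" and bB: "\<bar>b\<bar> < B"
    using as bs a0 b0 Npos by (smt (verit) mult_le_cancel_right1 abs_ge_zero)+
  have leaf0': "{x * cis 0, x * cis psi} \<in> L" using leaf0 by simp
  have image: "{x * cis (real N * a), x * cis (real N * b)} \<in> L"
    by (rule power_image_rotated_leaf[OF img xN yN leaf])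
  consider "a > 0" "b > 0" | "a < 0" "b < 0" | "a > 0" "b < 0" | "a < 0" "b > 0"
    using a0 b0 by linarith
  then show False
  proof cases
    case 1
    have "crossing {x * cis 0, x * cis psi} {x * cis a, x * cis (psi + b)}"
      using 1 aB bB B1 B2 by (intro crossing_cis_interleaved nx) auto
    then show False using nc leaf0' leaf by blast
  next
    case 2
    have "crossing {x * cis a, x * cis (psi + b)} {x * cis 0, x * cis psi}"
      using 2 aB bB B1 B2 by (intro crossing_cis_interleaved nx) auto
    then show False using nc leaf0' leaf by blast
  next
    case 3
    have "real N * b < 0" "0 < real N * a" using 3 Npos by (simp_all add: mult_pos_neg)
    moreover have "real N * a < psi" "psi < real N * b + 2*pi" using as bs 3 B1 B2 by simp_all
    ultimately have "crossing {x * cis (real N * b), x * cis (real N * a)} {x * cis 0, x * cis psi}"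
      by (intro crossing_cis_interleaved nx) auto
    then show False using nc leaf0' image by (metis insert_commute)
  next
    case 4
    have "real N * a < 0" "0 < real N * b" using 4 Npos by (simp_all add: mult_pos_neg)
    moreover have "real N * b < psi" "psi < real N * a + 2*pi" using as bs 4 B1 B2 by simp_all
    ultimately have "crossing {x * cis (real N * a), x * cis (real N * b)} {x * cis 0, x * cis psi}"
      by (intro crossing_cis_interleaved nx) auto
    then show False using nc leaf0' image by blast
  qed
qed

text \<open>The d siblings have pairwise disjoint segments and each contains a preimage of
  \<sigma>(c), so choosing one per sibling exhausts all d preimages, c among them.\<close>
lemma sibling_leaf_through_preimage:
  assumes si: "sibling_invariant d L" and d: "d > 0" and l: "l \<in> L" "\<not> critical d l"
    and c: "sigma d c \<in> sigma d ` l" and c0: "c \<noteq> 0"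
  obtains m where "m \<in> L" "c \<in> m" "sigma d ` m = sigma d ` l"
    "m = l \<or> chord_seg m \<inter> chord_seg l = {}"
proof -
  obtain s :: "nat \<Rightarrow> complex set" where s0: "s 0 = l"
    and sL: "\<forall>i<d. s i \<in> L \<and> sigma d ` (s i) = sigma d ` l"
    and sdisj: "\<forall>i<d. \<forall>j<d. i \<noteq> j \<longrightarrow> chord_seg (s i) \<inter> chord_seg (s j) = {}"
  proof -
    have "\<forall>l\<in>L. \<not> critical d l \<longrightarrow> (\<exists>s :: nat \<Rightarrow> complex set. s 0 = l \<and>
            (\<forall>i<d. s i \<in> L \<and> sigma d ` (s i) = sigma d ` l) \<and>
            (\<forall>i<d. \<forall>j<d. i \<noteq> j \<longrightarrow> chord_seg (s i) \<inter> chord_seg (s j) = {}))"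
      using si unfolding sibling_invariant_def by blast
    from this[rule_format, OF l] obtain s :: "nat \<Rightarrow> complex set" where "s 0 = l"
      and "\<forall>i<d. s i \<in> L \<and> sigma d ` (s i) = sigma d ` l"
      and "\<forall>i<d. \<forall>j<d. i \<noteq> j \<longrightarrow> chord_seg (s i) \<inter> chord_seg (s j) = {}"
      by blast
    then show ?thesis by (rule that)
  qed
  define p where "p i = (SOME q. q \<in> s i \<and> sigma d q = sigma d c)" for i
  have p: "p i \<in> s i \<and> sigma d (p i) = sigma d c" if "i < d" for i
  proof -
    have "sigma d c \<in> sigma d ` s i" using that sL c by simp
    then obtain q where "q \<in> s i" "sigma d q = sigma d c" by (metis imageE)
    then show ?thesis unfolding p_def by (metis (mono_tags, lifting) someI)
  qed
  have "inj_on p {..<d}"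
  proof (rule inj_onI, rule ccontr)
    fix i j assume i: "i \<in> {..<d}" and j: "j \<in> {..<d}" and "p i = p j" "i \<noteq> j"
    then have "p i \<in> chord_seg (s i) \<inter> chord_seg (s j)"
      using p subset_chord_seg by (metis IntI lessThan_iff subsetD)
    with sdisj i j \<open>i \<noteq> j\<close> show False by auto
  qed
  then have "card (p ` {..<d}) = d" by (simp add: card_image)
  moreover have "p ` {..<d} \<subseteq> {z. z ^ d = sigma d c}" using p by (auto simp: sigma_def)
  moreover have "card {z. z ^ d = sigma d c} = d"
    using c0 d by (intro card_nth_roots) (simp_all add: sigma_def)
  moreover have "finite {z. z ^ d = sigma d c}" using d by (rule finite_nth_roots)
  ultimately have "p ` {..<d} = {z. z ^ d = sigma d c}" by (metis card_subset_eq)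
  moreover have "c \<in> {z. z ^ d = sigma d c}" by (simp add: sigma_def)
  ultimately obtain i where i: "i < d" and "c = p i" by auto
  then have "c \<in> s i" using p by simp
  moreover have "s i = l \<or> chord_seg (s i) \<inter> chord_seg l = {}"
    using sdisj i d s0 by (cases "i = 0") auto
  ultimately show ?thesis using that sL i by blast
qed

lemma sibling_leaf_at_preimage:
  assumes si: "sibling_invariant d L" and d: "d > 0" and leaf: "{x, w} \<in> L"
    and cw: "sigma d c = sigma d w" and cx: "sigma d c \<noteq> sigma d x"
    and c_ne: "c \<noteq> w" and c0: "c \<noteq> 0"
  obtains e where "{c, e} \<in> L" "e \<noteq> x" "sigma d e = sigma d x"
proof -
  have ncrit: "\<not> critical d {x, w}"
  proof
    assume "critical d {x, w}"
    then obtain p q where "{x, w} = {p, q}" "p \<noteq> q" "sigma d p = sigma d q"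
      unfolding critical_def by blast
    then have "sigma d x = sigma d w" by (auto simp: doubleton_eq_iff)
    with cw cx show False by simp
  qed
  have c: "sigma d c \<in> sigma d ` {x, w}" using cw by simp
  obtain m where mL: "m \<in> L" and cm: "c \<in> m" and m_img: "sigma d ` m = sigma d ` {x, w}"
    and m_disj: "m = {x, w} \<or> chord_seg m \<inter> chord_seg {x, w} = {}"
    by (rule sibling_leaf_through_preimage[OF si d leaf ncrit c c0])
  have "c \<noteq> x" using cx by auto
  then have "m \<noteq> {x, w}" using cm c_ne by auto
  then have "chord_seg m \<inter> chord_seg {x, w} = {}" using m_disj by simp
  moreover have "x \<in> chord_seg {x, w}" using subset_chord_seg by blast
  ultimately have "x \<notin> m" using subset_chord_seg[of m] by blast
  obtain e where me: "m = {c, e}"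
    using sibling_invariant_is_chord[OF si mL] cm unfolding is_chord_def by auto
  have "sigma d x \<in> {sigma d c, sigma d e}" using m_img me by auto
  then have "sigma d e = sigma d x" using cx by auto
  moreover have "e \<noteq> x" using \<open>x \<notin> m\<close> me by auto
  ultimately show ?thesis using mL me by (intro that[of e]) auto
qed

lemma leaf_from_periodic_point_angle_eq_0:
  fixes x :: complex
  assumes si: "sibling_invariant d L" and d2: "d \<ge> 2" and n: "n > 0"
    and nx: "norm x = 1" and xN: "x ^ (d ^ n) = x"
    and psi1: "2*pi/d \<le> psi" and psi2: "psi \<le> 2*pi - 2*pi/d" and psid: "cis psi ^ d = 1"
    and leaf: "{x, x * cis (psi + b)} \<in> L" and small: "real (d ^ n) * \<bar>b\<bar> < 2*pi/d"
  shows "b = 0"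
proof (rule ccontr)
  assume b0: "b \<noteq> 0"
  have dpos: "d > 0" using d2 by simp
  have dN: "d \<le> d ^ n" using d2 n by (intro self_le_power) auto
  have x0: "x \<noteq> 0" using nx by auto
  have cw: "sigma d (x * cis b) = sigma d (x * cis (psi + b))"
    by (simp add: sigma_def cis_mult[symmetric] power_mult_distrib psid)
  have "real d * \<bar>b\<bar> \<le> real (d ^ n) * \<bar>b\<bar>" using dN by (intro mult_right_mono) auto
  also have "\<dots> < 2*pi/d" by (fact small)
  also have "\<dots> \<le> 2*pi" using dpos by (simp add: field_simps)
  finally have "cis (real d * b) \<noteq> 1" using b0 dpos by (intro cis_neq_1) (auto simp: abs_mult)
  then have cx: "sigma d (x * cis b) \<noteq> sigma d x"
    using x0 by (simp add: sigma_def power_mult_cis)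
  have "2*pi/d > 0" using dpos by simp
  then have "0 < psi" "psi < 2*pi" using psi1 psi2 by linarith+
  then have "cis psi \<noteq> 1" by (intro cis_neq_1) auto
  then have ne: "x * cis b \<noteq> x * cis (psi + b)" using x0 by (simp add: cis_mult[symmetric])
  have nz: "x * cis b \<noteq> 0" using x0 by simp
  obtain e where leaf': "{x * cis b, e} \<in> L" and ex: "e \<noteq> x"
    and sex: "sigma d e = sigma d x"
    by (rule sibling_leaf_at_preimage[OF si dpos leaf cw cx ne nz])
  have ed: "(e / x) ^ d = 1" using sex x0 by (simp add: sigma_def power_divide)
  have e1: "e / x \<noteq> 1" using ex x0 by simp
  obtain phi where phi: "e / x = cis phi" "2*pi/d \<le> phi" "phi \<le> 2*pi - 2*pi/d"
    by (rule nontrivial_root_of_unity_angle[OF dpos ed e1])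
  have eform: "e = x * cis phi" using phi(1) x0 by (simp add: field_simps)
  have eN: "(x * cis phi) ^ (d ^ n) = x"
    using power_pow_eq_periodic[OF n _ xN] sex eform by (simp add: sigma_def)
  have "d ^ n \<ge> 2" using d2 dN by linarith
  from leaf_near_fixed_point_angle_eq_0[OF sibling_invariant_no_crossing[OF si]
      sibling_invariant_image_power[OF si] this nx xN leaf'[unfolded eform] eN small phi(2,3)]
  show False using b0 by contradiction
qed

lemma leaf_near_critical_leaf_eq:
  fixes x :: complex
  assumes si: "sibling_invariant d L" and d2: "d \<ge> 2" and n: "n > 0"
    and nx: "norm x = 1" and xN: "x ^ (d ^ n) = x"
    and psi1: "2*pi/d \<le> psi" and psi2: "psi \<le> 2*pi - 2*pi/d" and psid: "cis psi ^ d = 1"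
    and crit: "{x, x * cis psi} \<in> L" and leaf: "{x * cis a, x * cis (psi + b)} \<in> L"
    and as: "real (d ^ n) * \<bar>a\<bar> < 2*pi/d" and bs: "real (d ^ n) * \<bar>b\<bar> < 2*pi/d"
  shows "a = 0 \<and> b = 0"
proof -
  note nc = sibling_invariant_no_crossing[OF si] and img = sibling_invariant_image_power[OF si]
  have "d \<le> d ^ n" using d2 n by (intro self_le_power) auto
  then have N2: "d ^ n \<ge> 2" using d2 by linarith
  have "(x * cis psi) ^ d = x ^ d" using psid by (simp add: power_mult_distrib)
  from power_pow_eq_periodic[OF n this xN] have yN: "(x * cis psi) ^ (d ^ n) = x" .
  have "a = 0 \<or> b = 0"
    by (rule leaf_near_preperiodic_leaf_shares_endpoint[OF nc img N2 nx xN crit yN psi1 psi2 leaf as bs])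
  moreover have "b = 0" if "a = 0"
    using leaf_from_periodic_point_angle_eq_0[OF si d2 n nx xN psi1 psi2 psid _ bs] leaf that
    by simp
  moreover have "a = 0" if "b = 0"
    using leaf_near_fixed_point_angle_eq_0[OF nc img N2 nx xN _ yN as psi1 psi2] leaf that
    by simp
  ultimately show ?thesis by blast
qed

lemma critical_leaf_angle:
  assumes si: "sibling_invariant d L" and leaf: "{x, y} \<in> L" and crit: "critical d {x, y}"
    and d: "d > 0"
  obtains psi where "norm x = 1" "norm y = 1" "x \<noteq> y" "y = x * cis psi"
    "2*pi/d \<le> psi" "psi \<le> 2*pi - 2*pi/d" "cis psi ^ d = 1"
proof -
  obtain p q where "{x, y} = {p, q}" "p \<noteq> q" "sigma d p = sigma d q"
    using crit unfolding critical_def by blast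
  then have xy: "x \<noteq> y" and xyd: "x ^ d = y ^ d" by (auto simp: doubleton_eq_iff sigma_def)
  have nx: "norm x = 1" and ny: "norm y = 1"
    using sibling_invariant_is_chord[OF si leaf] unfolding is_chord_def by (auto simp: doubleton_eq_iff)
  have x0: "x \<noteq> 0" using nx by auto
  have yx: "(y / x) ^ d = 1" using x0 by (simp add: power_divide xyd[symmetric])
  have yx1: "y / x \<noteq> 1" using xy x0 by simp
  obtain psi where psi: "y / x = cis psi" "2*pi/d \<le> psi" "psi \<le> 2*pi - 2*pi/d"
    by (rule nontrivial_root_of_unity_angle[OF d yx yx1])
  have "y = x * cis psi" using psi(1) x0 by (simp add: field_simps)
  moreover have "cis psi ^ d = 1" using yx psi(1) by simp
  ultimately show ?thesis using that nx ny xy psi(2,3) by blast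
qed

lemma infdist_le_hausdorff_dist:
  assumes A: "A \<noteq> {}" and B: "bounded B" and b: "b \<in> B"
  shows "infdist b A \<le> hausdorff_dist A B"
proof -
  obtain a0 where a0: "a0 \<in> A" using A by blast
  obtain R where R: "\<And>b'. b' \<in> B \<Longrightarrow> norm b' \<le> R" using B unfolding bounded_iff by blast
  have "bdd_above ((\<lambda>b. infdist b A) ` B)"
  proof (rule bdd_aboveI2)
    fix b' assume "b' \<in> B"
    have "infdist b' A \<le> dist b' a0" using a0 by (rule infdist_le)
    also have "\<dots> \<le> norm b' + norm a0" by (simp add: dist_norm norm_triangle_ineq4)
    also have "\<dots> \<le> R + norm a0" using R \<open>b' \<in> B\<close> by simp
    finally show "infdist b' A \<le> R + norm a0" .
  qed
  then have "infdist b A \<le> (SUP b\<in>B. infdist b A)" using b by (rule cSUP_upper2) simp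
  then show ?thesis unfolding hausdorff_dist_def by simp
qed

lemma norm_diff_unit_sq:
  fixes a x :: complex
  assumes "norm a = 1" "norm x = 1"
  shows "(norm (a - x))^2 = 2 - 2 * Re (a * cnj x)"
proof -
  have "Re a ^2 + Im a ^2 = 1" "Re x ^2 + Im x ^2 = 1"
    using assms by (metis cmod_power2 power_one)+
  then show ?thesis unfolding cmod_power2 by (simp add: power2_eq_square algebra_simps)
qed

text \<open>Re((x - z) cnj x) is a convex combination of the quantities 1 - Re(a cnj x) and
  1 - Re(b cnj x), both nonnegative, and the one with weight \<ge> 1/2 is less than 2 eps.\<close>
lemma chord_seg_near_point_endpoint:
  fixes a b x z :: complex
  assumes na: "norm a = 1" and nb: "norm b = 1" and nx: "norm x = 1"
    and z: "z \<in> chord_seg {a, b}" and dz: "dist x z < eps"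
  shows "(norm (a - x))^2 < 4 * eps \<or> (norm (b - x))^2 < 4 * eps"
proof -
  obtain t where t: "0 \<le> t" "t \<le> 1" and zt: "z = (1 - t) *\<^sub>R a + t *\<^sub>R b"
    using z unfolding chord_seg_def segment_convex_hull[symmetric] closed_segment_def by blast
  have "x * cnj x = 1" using nx by (metis complex_norm_square of_real_1 power_one)
  then have "Re ((x - z) * cnj x) = (1 - t) * (1 - Re (a * cnj x)) + t * (1 - Re (b * cnj x))"
    unfolding zt by (simp add: scaleR_conv_of_real algebra_simps)
  moreover have "Re ((x - z) * cnj x) < eps"
    using complex_Re_le_cmod[of "(x - z) * cnj x"] dz nx by (simp add: norm_mult dist_norm)
  moreover have "Re (a * cnj x) \<le> 1" "Re (b * cnj x) \<le> 1"
    using complex_Re_le_cmod[of "a * cnj x"] complex_Re_le_cmod[of "b * cnj x"] na nb nx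
    by (simp_all add: norm_mult)
  ultimately have key: "(1 - t) * (1 - Re (a * cnj x)) + t * (1 - Re (b * cnj x)) < eps"
    and ra: "0 \<le> 1 - Re (a * cnj x)" and rb: "0 \<le> 1 - Re (b * cnj x)"
    by simp_all
  have half: "u < 2 * eps" if "1/2 * u \<le> p" "0 \<le> q" "p + q < eps" for u p q :: real
    using that by linarith
  have "1 - Re (a * cnj x) < 2 * eps \<or> 1 - Re (b * cnj x) < 2 * eps"
  proof (cases "t \<le> 1/2")
    case True
    have "1/2 * (1 - Re (a * cnj x)) \<le> (1 - t) * (1 - Re (a * cnj x))"
      using True ra by (intro mult_right_mono) auto
    from half[OF this mult_nonneg_nonneg[OF t(1) rb] key] show ?thesis ..
  next
    case False
    have "1/2 * (1 - Re (b * cnj x)) \<le> t * (1 - Re (b * cnj x))"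
      using False rb by (intro mult_right_mono) auto
    moreover have "0 \<le> (1 - t) * (1 - Re (a * cnj x))" using t ra by simp
    moreover have "t * (1 - Re (b * cnj x)) + (1 - t) * (1 - Re (a * cnj x)) < eps"
      using key by (simp only: add.commute)
    ultimately have "1 - Re (b * cnj x) < 2 * eps" by (rule half)
    then show ?thesis ..
  qed
  then show ?thesis using norm_diff_unit_sq[OF na nx] norm_diff_unit_sq[OF nb nx] by linarith
qed

lemma hausdorff_close_chord_endpoint:
  fixes a b x y w :: complex
  assumes na: "norm a = 1" and nb: "norm b = 1" and nx: "norm x = 1" and ny: "norm y = 1"
    and r: "r > 0" and close: "hausdorff_dist (chord_seg {a, b}) (chord_seg {x, y}) < r^2 / 4"
    and w: "w \<in> {x, y}"
  shows "dist a w < r \<or> dist b w < r"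
proof -
  have ne: "chord_seg {a, b} \<noteq> {}" using subset_chord_seg[of "{a, b}"] by blast
  have cl: "closed (chord_seg {a, b})"
    unfolding chord_seg_def by (intro compact_imp_closed compact_convex_hull) simp
  have bd: "bounded (chord_seg {x, y})"
    unfolding chord_seg_def by (intro finite_imp_bounded_convex_hull) simp
  have "w \<in> chord_seg {x, y}" using w subset_chord_seg by blast
  from infdist_le_hausdorff_dist[OF ne bd this] close
  have "infdist w (chord_seg {a, b}) < r^2 / 4" by linarith
  moreover obtain z where "z \<in> chord_seg {a, b}" "infdist w (chord_seg {a, b}) = dist w z"
    using infdist_attains_inf[OF cl ne] by blast
  ultimately have "(norm (a - w))^2 < r^2 \<or> (norm (b - w))^2 < r^2"
    using chord_seg_near_point_endpoint[OF na nb, of w z "r^2 / 4"] w nx ny by auto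
  then show ?thesis using r by (auto simp: dist_norm power_less_imp_less_base)
qed

lemma hausdorff_close_chord_endpoints:
  fixes a b x y :: complex
  assumes na: "norm a = 1" and nb: "norm b = 1" and nx: "norm x = 1" and ny: "norm y = 1"
    and r: "r > 0" "2 * r \<le> dist x y"
    and close: "hausdorff_dist (chord_seg {a, b}) (chord_seg {x, y}) < r^2 / 4"
  obtains a' b' where "{a, b} = {a', b'}" "dist a' x < r" "dist b' y < r"
proof -
  note near = hausdorff_close_chord_endpoint[OF na nb nx ny r(1) close]
  have "\<not> (dist w x < r \<and> dist w y < r)" for w
    using dist_triangle[of x y w] dist_commute[of x w] r(2) by linarith
  then show ?thesis using near[of x] near[of y] that by (metis insertCI insert_commute)
qed

lemma unit_near_rotation:
  assumes eta: "eta > 0"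
  obtains del where "del > 0"
    "\<And>x a. norm x = 1 \<Longrightarrow> norm a = 1 \<Longrightarrow> dist a x < del \<Longrightarrow> \<exists>al. a = x * cis al \<and> \<bar>al\<bar> < eta"
proof -
  have "(1::complex) \<notin> \<real>\<^sub>\<le>\<^sub>0" by (auto simp: nonpos_Reals_def)
  then have "continuous (at 1) Arg" by (rule continuous_at_Arg)
  then obtain del where del: "del > 0" and h: "\<And>z. dist z 1 < del \<Longrightarrow> dist (Arg z) (Arg 1) < eta"
    using eta unfolding continuous_at_eps_delta by blast
  have "\<exists>al. a = x * cis al \<and> \<bar>al\<bar> < eta"
    if nx: "norm x = 1" and na: "norm a = 1" and dax: "dist a x < del" for x a :: complex
  proof -
    have x0: "x \<noteq> 0" using nx by auto
    have "dist (a / x) 1 = norm (a - x) / norm x" using x0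
      by (simp add: dist_norm norm_divide[symmetric] diff_divide_distrib)
    then have "\<bar>Arg (a / x)\<bar> < eta" using h dax nx by (simp add: dist_norm)
    moreover have "a / x \<noteq> 0" using na x0 by auto
    with na nx have "cis (Arg (a / x)) = a / x" by (simp add: cis_Arg sgn_div_norm norm_divide)
    ultimately show ?thesis using x0 by (metis nonzero_mult_div_cancel_left mult.commute times_divide_eq_right)
  qed
  with del show ?thesis using that by blast
qed

lemma hausdorff_close_chord_angles:
  fixes x y :: complex
  assumes nx: "norm x = 1" and ny: "norm y = 1" and xy: "x \<noteq> y" and eta: "eta > 0"
  obtains eps where "eps > 0"
    "\<And>a b. norm a = 1 \<Longrightarrow> norm b = 1 \<Longrightarrow>
      hausdorff_dist (chord_seg {a, b}) (chord_seg {x, y}) < eps \<Longrightarrow>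
      \<exists>al be. {a, b} = {x * cis al, y * cis be} \<and> \<bar>al\<bar> < eta \<and> \<bar>be\<bar> < eta"
proof -
  obtain del where del: "del > 0" and rot:
    "\<And>x a. norm x = 1 \<Longrightarrow> norm a = 1 \<Longrightarrow> dist a x < del \<Longrightarrow> \<exists>al. a = x * cis al \<and> \<bar>al\<bar> < eta"
    using unit_near_rotation[OF eta] by blast
  define r where "r = min del (dist x y / 2)"
  have r: "r > 0" "2 * r \<le> dist x y" using del xy by (auto simp: r_def)
  have "\<exists>al be. {a, b} = {x * cis al, y * cis be} \<and> \<bar>al\<bar> < eta \<and> \<bar>be\<bar> < eta"
    if na: "norm a = 1" and nb: "norm b = 1"
      and close: "hausdorff_dist (chord_seg {a, b}) (chord_seg {x, y}) < r^2 / 4" for a b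
  proof -
    obtain a' b' where ab: "{a, b} = {a', b'}" "dist a' x < r" "dist b' y < r"
      using hausdorff_close_chord_endpoints[OF na nb nx ny r close] .
    have "norm a' = 1" "norm b' = 1" using ab(1) na nb by (auto simp: doubleton_eq_iff)
    moreover have "dist a' x < del" "dist b' y < del" using ab(2,3) by (auto simp: r_def)
    ultimately obtain al be where "a' = x * cis al" "\<bar>al\<bar> < eta" "b' = y * cis be" "\<bar>be\<bar> < eta"
      using rot nx ny by metis
    then show ?thesis using ab(1) by blast
  qed
  moreover have "r^2 / 4 > 0" using r by simp
  ultimately show ?thesis using that by blast
qed

lemma isolated_leafI:
  assumes eps: "eps > 0"
    and near: "\<And>l. l \<in> L \<Longrightarrow> hausdorff_dist (chord_seg l) (chord_seg m) < eps \<Longrightarrow> l = m"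
  shows "isolated_leaf L m"
  unfolding isolated_leaf_def
proof
  assume "\<exists>s. (\<forall>k. s k \<in> L - {m}) \<and> (\<lambda>k. hausdorff_dist (chord_seg (s k)) (chord_seg m)) \<longlonglongrightarrow> 0"
  then obtain s where sL: "\<And>k. s k \<in> L - {m}"
    and lim: "(\<lambda>k. hausdorff_dist (chord_seg (s k)) (chord_seg m)) \<longlonglongrightarrow> 0" by blast
  obtain k where "hausdorff_dist (chord_seg (s k)) (chord_seg m) < eps"
    using eventually_happens'[OF _ order_tendstoD(2)[OF lim eps]] by auto
  then show False using near sL[of k] by blast
qed

lemma periodic_critical_leaf_neighbourhood:
  assumes d2: "d \<ge> 2" and si: "sibling_invariant d L" and leaf: "{x, y} \<in> L"
    and crit: "critical d {x, y}" and periodic: "periodic_pt d x"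
  obtains eps where "eps > 0"
    "\<And>l. l \<in> L \<Longrightarrow> hausdorff_dist (chord_seg l) (chord_seg {x, y}) < eps \<Longrightarrow> l = {x, y}"
proof -
  have d: "d > 0" using d2 by simp
  obtain n where n: "n > 0" and xN: "x ^ (d ^ n) = x"
    using periodic unfolding periodic_pt_def funpow_sigma by blast
  obtain psi where nx: "norm x = 1" and ny: "norm y = 1" and xy: "x \<noteq> y" and y: "y = x * cis psi"
    and psi: "2*pi/d \<le> psi" "psi \<le> 2*pi - 2*pi/d" "cis psi ^ d = 1"
    by (rule critical_leaf_angle[OF si leaf crit d])
  define eta where "eta = 2*pi/d / real (d ^ n)"
  have N: "real (d ^ n) > 0" using d by simp
  then have "eta > 0" using d by (simp add: eta_def)
  then obtain eps where eps: "eps > 0" and angles: "\<And>a b. norm a = 1 \<Longrightarrow> norm b = 1 \<Longrightarrow>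
      hausdorff_dist (chord_seg {a, b}) (chord_seg {x, y}) < eps \<Longrightarrow>
      \<exists>al be. {a, b} = {x * cis al, y * cis be} \<and> \<bar>al\<bar> < eta \<and> \<bar>be\<bar> < eta"
    using hausdorff_close_chord_angles[OF nx ny xy] by blast
  have "l = {x, y}" if lL: "l \<in> L" and close: "hausdorff_dist (chord_seg l) (chord_seg {x, y}) < eps" for l
  proof -
    obtain a b where na: "norm a = 1" and nb: "norm b = 1" and ab: "l = {a, b}"
      using sibling_invariant_is_chord[OF si lL] unfolding is_chord_def by auto
    obtain al be where l: "l = {x * cis al, x * cis (psi + be)}"
      and "\<bar>al\<bar> < eta" "\<bar>be\<bar> < eta"
      using angles[OF na nb close[unfolded ab]] ab by (auto simp: y cis_mult[symmetric] mult.assoc)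
    then have "real (d ^ n) * \<bar>al\<bar> < 2*pi/d" "real (d ^ n) * \<bar>be\<bar> < 2*pi/d"
      using N by (metis eta_def pos_less_divide_eq mult.commute)+
    then have "al = 0 \<and> be = 0"
      using leaf_near_critical_leaf_eq[OF si d2 n nx xN psi] leaf lL l y by auto
    then show ?thesis using l y by simp
  qed
  with eps that show ?thesis by blast
qed

theorem lemmal:
  fixes d :: nat and L :: "complex set set" and x y :: complex
  assumes "d \<ge> 2"
    and "sibling_invariant d L"
    and "{x, y} \<in> L"
    and "critical d {x, y}"
    and "periodic_pt d x"
  shows "isolated_leaf L {x, y}"
proof -
  obtain eps where "eps > 0"
    "\<And>l. l \<in> L \<Longrightarrow> hausdorff_dist (chord_seg l) (chord_seg {x, y}) < eps \<Longrightarrow> l = {x, y}"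
    using periodic_critical_leaf_neighbourhood[OF assms] by blast
  then show ?thesis by (rule isolated_leafI)
qed

end
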